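(* Let $\mathcal D\subseteq M(\mathbb C)^g$ be a bounded non-commutative domain containing $0$, let $f:\mathcal D\to\mathcal D$ be an analytic free map, and let $\phi=f[1]:\mathcal D(1)\to\mathcal D(1)$ with $\phi(0)=0$. For a positive integer $n$ let $\Phi=f[n]:\mathcal D(n)\to\mathcal D(n)$. Then the derivative $\Phi'(0):M_n(\mathbb C)^g\to M_n(\mathbb C)^g$ is unitarily equivalent to $I_n\otimes\phi'(0)$ (identifying $M_n(\mathbb C)^g$ with $M_n(\mathbb C)\otimes\mathbb C^g$).
   Context: $M_n(\mathbb C)^g$ denotes $g$-tuples $X=(X_1,\dots,X_g)$ of $n\times n$ complex matrices, identified with $M_n(\mathbb C)\otimes\mathbb C^g$; products, unitary conjugation and direct sums of tuples are entrywise. A non-commutative set $\mathcal D\subseteq M(\mathbb C)^g$ is a sequence $(\mathcal D(n))_n$, $\mathcal D(n)\subseteq M_n(\mathbb C)^g$, closed under simultaneous unitary similarity and under direct sums; a non-commutative domain if each $\mathcal D(n)$ is open and connected; containing $0$ if $0\in\mathcal D(n)$ for all $n$; bounded if there is $C\in\mathbb R$ with $C^2I-\sum_jX_jX_j^*\succ0$ for all $n$ and $X\in\mathcal D(n)$. A free map is a sequence of functions $f[n]:\mathcal D(n)\to\mathcal D(n)$ such that whenever $X\in\mathcal D(n)$, $Y\in\mathcal D(m)$, $\Gamma\in\mathbb C^{n\times m}$ with $X\Gamma=\Gamma Y$, then $f[n](X)\Gamma=\Gamma f[m](Y)$; it is analytic if each $f[n]$ is holomorphic. *)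

theory Defs
  imports Complex_Main "Jordan_Normal_Form.Matrix"
begin

text \<open>A point of M_n(C)^g is a list of g complex n x n matrices (JNF matrices).\<close>

definition level :: "nat \<Rightarrow> nat \<Rightarrow> complex mat list set" where
  "level g n = {X. length X = g \<and> (\<forall>j<g. X ! j \<in> carrier_mat n n)}"

definition adj :: "complex mat \<Rightarrow> complex mat" where
  "adj A = mat (dim_col A) (dim_row A) (\<lambda>(i,j). cnj (A $$ (j,i)))"

definition unitary_mat :: "nat \<Rightarrow> complex mat \<Rightarrow> bool" where
  "unitary_mat n U \<longleftrightarrow> U \<in> carrier_mat n n \<and> U * adj U = 1\<^sub>m n"

definition tzero :: "nat \<Rightarrow> nat \<Rightarrow> complex mat list" where
  "tzero g n = replicate g (0\<^sub>m n n)"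

definition tadd :: "complex mat list \<Rightarrow> complex mat list \<Rightarrow> complex mat list" where
  "tadd X Y = map2 (+) X Y"

definition tsub :: "complex mat list \<Rightarrow> complex mat list \<Rightarrow> complex mat list" where
  "tsub X Y = map2 (-) X Y"

definition tscale :: "complex \<Rightarrow> complex mat list \<Rightarrow> complex mat list" where
  "tscale c X = map (\<lambda>A. c \<cdot>\<^sub>m A) X"

definition tinner :: "complex mat list \<Rightarrow> complex mat list \<Rightarrow> complex" where
  "tinner X Y = (\<Sum>j<length X. \<Sum>i<dim_row (X ! j). \<Sum>k<dim_col (X ! j).
      (X ! j) $$ (i,k) * cnj ((Y ! j) $$ (i,k)))"

definition tnorm :: "complex mat list \<Rightarrow> real" where
  "tnorm X = sqrt (\<Sum>j<length X. \<Sum>i<dim_row (X ! j). \<Sum>k<dim_col (X ! j).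
      (cmod ((X ! j) $$ (i,k)))\<^sup>2)"

definition topen :: "nat \<Rightarrow> nat \<Rightarrow> complex mat list set \<Rightarrow> bool" where
  "topen g n S \<longleftrightarrow> S \<subseteq> level g n \<and>
     (\<forall>X\<in>S. \<exists>e>0. \<forall>Y\<in>level g n. tnorm (tsub Y X) < e \<longrightarrow> Y \<in> S)"

definition tconnected :: "nat \<Rightarrow> nat \<Rightarrow> complex mat list set \<Rightarrow> bool" where
  "tconnected g n S \<longleftrightarrow> \<not> (\<exists>U V. topen g n U \<and> topen g n V \<and> S \<subseteq> U \<union> V \<and>
      S \<inter> U \<noteq> {} \<and> S \<inter> V \<noteq> {} \<and> S \<inter> U \<inter> V = {})"

definition tlinear :: "nat \<Rightarrow> nat \<Rightarrow> (complex mat list \<Rightarrow> complex mat list) \<Rightarrow> bool" where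
  "tlinear g n L \<longleftrightarrow> (\<forall>X\<in>level g n. L X \<in> level g n) \<and>
     (\<forall>X\<in>level g n. \<forall>Y\<in>level g n. L (tadd X Y) = tadd (L X) (L Y)) \<and>
     (\<forall>c. \<forall>X\<in>level g n. L (tscale c X) = tscale c (L X))"

definition has_tderiv :: "nat \<Rightarrow> nat \<Rightarrow> complex mat list set \<Rightarrow>
    (complex mat list \<Rightarrow> complex mat list) \<Rightarrow> (complex mat list \<Rightarrow> complex mat list) \<Rightarrow>
    complex mat list \<Rightarrow> bool" where
  "has_tderiv g n S F L X0 \<longleftrightarrow> tlinear g n L \<and>
     (\<forall>e>0. \<exists>d>0. \<forall>H\<in>level g n. tadd X0 H \<in> S \<longrightarrow> tnorm H < d \<longrightarrow>
        tnorm (tsub (tsub (F (tadd X0 H)) (F X0)) (L H)) \<le> e * tnorm H)"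

definition tholomorphic :: "nat \<Rightarrow> nat \<Rightarrow> (complex mat list \<Rightarrow> complex mat list) \<Rightarrow>
    complex mat list set \<Rightarrow> bool" where
  "tholomorphic g n F S \<longleftrightarrow> (\<forall>X\<in>S. \<exists>L. has_tderiv g n S F L X)"

definition tconj :: "complex mat \<Rightarrow> complex mat list \<Rightarrow> complex mat list" where
  "tconj U X = map (\<lambda>A. U * A * adj U) X"

definition tdsum :: "complex mat list \<Rightarrow> complex mat list \<Rightarrow> complex mat list" where
  "tdsum X Y = map2 (\<lambda>A B. four_block_mat A (0\<^sub>m (dim_row A) (dim_col B))
                               (0\<^sub>m (dim_row B) (dim_col A)) B) X Y"

definition nc_set :: "nat \<Rightarrow> (nat \<Rightarrow> complex mat list set) \<Rightarrow> bool" where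
  "nc_set g D \<longleftrightarrow> (\<forall>n\<ge>1. D n \<subseteq> level g n) \<and>
     (\<forall>n\<ge>1. \<forall>X\<in>D n. \<forall>U. unitary_mat n U \<longrightarrow> tconj U X \<in> D n) \<and>
     (\<forall>n\<ge>1. \<forall>m\<ge>1. \<forall>X\<in>D n. \<forall>Y\<in>D m. tdsum X Y \<in> D (n + m))"

definition nc_domain :: "nat \<Rightarrow> (nat \<Rightarrow> complex mat list set) \<Rightarrow> bool" where
  "nc_domain g D \<longleftrightarrow> nc_set g D \<and> (\<forall>n\<ge>1. topen g n (D n) \<and> tconnected g n (D n))"

definition contains_zero :: "nat \<Rightarrow> (nat \<Rightarrow> complex mat list set) \<Rightarrow> bool" where
  "contains_zero g D \<longleftrightarrow> (\<forall>n\<ge>1. tzero g n \<in> D n)"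

definition posdef :: "nat \<Rightarrow> complex mat \<Rightarrow> bool" where
  "posdef n A \<longleftrightarrow> A \<in> carrier_mat n n \<and> adj A = A \<and>
     (\<forall>v\<in>carrier_vec n. v \<noteq> 0\<^sub>v n \<longrightarrow> 0 < Re (scalar_prod (map_vec cnj v) (A *\<^sub>v v)))"

definition tsumsq :: "nat \<Rightarrow> complex mat list \<Rightarrow> complex mat" where
  "tsumsq n X = foldr (\<lambda>A B. A * adj A + B) X (0\<^sub>m n n)"

definition nc_bounded :: "nat \<Rightarrow> (nat \<Rightarrow> complex mat list set) \<Rightarrow> bool" where
  "nc_bounded g D \<longleftrightarrow> (\<exists>C::real. \<forall>n\<ge>1. \<forall>X\<in>D n.
      posdef n (complex_of_real (C\<^sup>2) \<cdot>\<^sub>m 1\<^sub>m n - tsumsq n X))"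

definition free_map :: "nat \<Rightarrow> (nat \<Rightarrow> complex mat list set) \<Rightarrow>
    (nat \<Rightarrow> complex mat list \<Rightarrow> complex mat list) \<Rightarrow> bool" where
  "free_map g D f \<longleftrightarrow> (\<forall>n\<ge>1. \<forall>X\<in>D n. f n X \<in> D n) \<and>
     (\<forall>n m X Y \<Gamma>. n \<ge> 1 \<longrightarrow> m \<ge> 1 \<longrightarrow> X \<in> D n \<longrightarrow> Y \<in> D m \<longrightarrow> \<Gamma> \<in> carrier_mat n m \<longrightarrow>
        (\<forall>j<g. X ! j * \<Gamma> = \<Gamma> * Y ! j) \<longrightarrow> (\<forall>j<g. f n X ! j * \<Gamma> = \<Gamma> * f m Y ! j))"

definition analytic_free_map :: "nat \<Rightarrow> (nat \<Rightarrow> complex mat list set) \<Rightarrow>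
    (nat \<Rightarrow> complex mat list \<Rightarrow> complex mat list) \<Rightarrow> bool" where
  "analytic_free_map g D f \<longleftrightarrow> free_map g D f \<and> (\<forall>n\<ge>1. tholomorphic g n (f n) (D n))"

definition unitary_op :: "nat \<Rightarrow> nat \<Rightarrow> (complex mat list \<Rightarrow> complex mat list) \<Rightarrow> bool" where
  "unitary_op g n W \<longleftrightarrow> tlinear g n W \<and> W ` level g n = level g n \<and>
     (\<forall>X\<in>level g n. \<forall>Y\<in>level g n. tinner (W X) (W Y) = tinner X Y)"

text \<open>I_n (x) T for a linear map T on M_1(C)^g = C^g: with a_jk the j-th coordinate of
  T(e_k), (I_n (x) T)(X_1,...,X_g) = (sum_k a_jk X_k)_j.\<close>
definition unit_tup :: "nat \<Rightarrow> nat \<Rightarrow> complex mat list" where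
  "unit_tup g k = map (\<lambda>j. if j = k then 1\<^sub>m 1 else 0\<^sub>m 1 1) [0..<g]"

definition tampl :: "nat \<Rightarrow> nat \<Rightarrow> (complex mat list \<Rightarrow> complex mat list) \<Rightarrow>
    complex mat list \<Rightarrow> complex mat list" where
  "tampl g n T X = map (\<lambda>j. foldr (\<lambda>k B. ((T (unit_tup g k) ! j) $$ (0,0)) \<cdot>\<^sub>m (X ! k) + B)
                                  [0..<g] (0\<^sub>m n n)) [0..<g]"

end

theory Submission
  imports Defs
begin

(* If a column u of length n satisfies H_j u = h_j u for a scalar tuple h, then u intertwines
   tH with th, so the free-map property gives f[n](tH) u = u f[1](th) for all small t > 0;
   differentiating along the ray shows that Phi'(0) carries every such eigen-relation of (H, h)
   to one of (Phi'(0) H, phi'(0) h).  Applying this to the matrix units E_ab (x) e_k with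
   u = e_c and u = e_b - e_a pins down Phi'(0) (E_ab (x) e_k) = E_ab (x) phi'(0) e_k, so by
   linearity Phi'(0) = I_n (x) phi'(0) and the unitary can be taken to be the identity. *)

lemma level_nth: "X \<in> level g n \<Longrightarrow> j < g \<Longrightarrow> X ! j \<in> carrier_mat n n"
  by (simp add: level_def)

lemma level_length: "X \<in> level g n \<Longrightarrow> length X = g"
  by (simp add: level_def)

lemma tadd_nth: "j < length X \<Longrightarrow> j < length Y \<Longrightarrow> tadd X Y ! j = X ! j + Y ! j"
  by (simp add: tadd_def)

lemma tsub_nth: "j < length X \<Longrightarrow> j < length Y \<Longrightarrow> tsub X Y ! j = X ! j - Y ! j"
  by (simp add: tsub_def)

lemma tscale_nth: "j < length X \<Longrightarrow> tscale c X ! j = c \<cdot>\<^sub>m X ! j"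
  by (simp add: tscale_def)

lemma tadd_level: "X \<in> level g n \<Longrightarrow> Y \<in> level g n \<Longrightarrow> tadd X Y \<in> level g n"
  by (auto simp: level_def tadd_def)

lemma tsub_level: "X \<in> level g n \<Longrightarrow> Y \<in> level g n \<Longrightarrow> tsub X Y \<in> level g n"
  by (auto simp: level_def tsub_def intro!: minus_carrier_mat)

lemma tscale_level: "X \<in> level g n \<Longrightarrow> tscale c X \<in> level g n"
  by (auto simp: level_def tscale_def)

lemma tzero_level: "tzero g n \<in> level g n"
  by (auto simp: level_def tzero_def)

lemma tadd_tzero_left: "H \<in> level g n \<Longrightarrow> tadd (tzero g n) H = H"
  by (rule nth_equalityI) (auto simp: level_def tadd_def tzero_def)

lemma tsub_tzero_right: "H \<in> level g n \<Longrightarrow> tsub H (tzero g n) = H"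
  by (rule nth_equalityI) (auto simp: level_def tsub_def tzero_def intro!: eq_matI)

lemma tlinear_level: "tlinear g n L \<Longrightarrow> X \<in> level g n \<Longrightarrow> L X \<in> level g n"
  by (simp add: tlinear_def)

lemma tlinear_tzero:
  assumes "tlinear g n L"
  shows "L (tzero g n) = tzero g n"
proof -
  have "tscale 0 (tzero g n) = tzero g n"
    by (rule nth_equalityI) (auto simp: tscale_def tzero_def)
  then have "L (tzero g n) = tscale 0 (L (tzero g n))"
    using assms tzero_level by (metis tlinear_def)
  also have "\<dots> = tzero g n"
    using tlinear_level[OF assms tzero_level]
    by (intro nth_equalityI) (auto simp: tscale_def tzero_def level_def intro!: eq_matI)
  finally show ?thesis .
qed

lemma tnorm_nonneg: "tnorm X \<ge> 0"
  by (simp add: tnorm_def sum_nonneg)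

lemma tnorm_tscale: "tnorm (tscale c X) = cmod c * tnorm X"
proof -
  have "tnorm (tscale c X) = sqrt ((cmod c)\<^sup>2 * (\<Sum>j<length X. \<Sum>i<dim_row (X ! j).
      \<Sum>k<dim_col (X ! j). (cmod ((X ! j) $$ (i,k)))\<^sup>2))"
    unfolding tnorm_def tscale_def by (simp add: sum_distrib_left norm_mult power_mult_distrib)
  also have "\<dots> = cmod c * tnorm X"
    by (simp add: tnorm_def real_sqrt_mult)
  finally show ?thesis .
qed

lemma norm_entry_le_tnorm:
  assumes X: "X \<in> level g n" and "j < g" "i < n" "c < n"
  shows "cmod (X ! j $$ (i,c)) \<le> tnorm X"
proof -
  let ?row = "\<lambda>j i. \<Sum>k<n. (cmod (X ! j $$ (i,k)))\<^sup>2"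
  have "(cmod (X ! j $$ (i,c)))\<^sup>2 \<le> ?row j i"
    by (rule member_le_sum) (use assms in auto)
  also have "\<dots> \<le> (\<Sum>i<n. ?row j i)"
    by (rule member_le_sum) (use assms in \<open>auto intro: sum_nonneg\<close>)
  also have "\<dots> \<le> (\<Sum>j<g. \<Sum>i<n. ?row j i)"
    by (rule member_le_sum[where f = "\<lambda>j. \<Sum>i<n. ?row j i"])
       (use assms in \<open>auto intro!: sum_nonneg\<close>)
  also have "\<dots> = (tnorm X)\<^sup>2"
    using X by (auto simp: tnorm_def level_def sum_nonneg intro!: sum.cong)
  finally show ?thesis
    using tnorm_nonneg by (rule power2_le_imp_le)
qed

definition row_comb :: "nat \<Rightarrow> nat \<Rightarrow> nat \<Rightarrow> (nat \<Rightarrow> complex) \<Rightarrow> complex mat list \<Rightarrow> complex" where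
  "row_comb n j i w X = (\<Sum>c<n. w c * X ! j $$ (i,c))"

lemma row_comb_tsub:
  "X \<in> level g n \<Longrightarrow> Y \<in> level g n \<Longrightarrow> j < g \<Longrightarrow> i < n \<Longrightarrow>
    row_comb n j i w (tsub X Y) = row_comb n j i w X - row_comb n j i w Y"
  by (auto simp: row_comb_def tsub_nth level_def algebra_simps sum_subtractf intro!: sum.cong)

lemma row_comb_tscale:
  "X \<in> level g n \<Longrightarrow> j < g \<Longrightarrow> i < n \<Longrightarrow>
    row_comb n j i w (tscale a X) = a * row_comb n j i w X"
  by (auto simp: row_comb_def tscale_nth level_def sum_distrib_left algebra_simps intro!: sum.cong)

lemma norm_row_comb_le:
  assumes "X \<in> level g n" "j < g" "i < n"
  shows "cmod (row_comb n j i w X) \<le> (\<Sum>c<n. cmod (w c)) * tnorm X"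
proof -
  have "cmod (row_comb n j i w X) \<le> (\<Sum>c<n. cmod (w c) * cmod (X ! j $$ (i,c)))"
    unfolding row_comb_def by (rule order_trans[OF norm_sum]) (simp add: norm_mult)
  also have "\<dots> \<le> (\<Sum>c<n. cmod (w c) * tnorm X)"
    by (intro sum_mono mult_left_mono norm_entry_le_tnorm[OF assms]) auto
  finally show ?thesis
    by (simp add: sum_distrib_right)
qed

section \<open>Directional derivatives at the origin\<close>

lemma eventually_at_right_zero_less:
  "b > 0 \<Longrightarrow> \<forall>\<^sub>F t in at_right (0::real). t < b"
  by (auto simp: eventually_at_right_field)

lemma tnorm_ray_less:
  assumes "0 < t" "t < r / (tnorm H + 1)"
  shows "tnorm (tscale (of_real t) H) < r"
proof -
  have "t * (tnorm H + 1) < r"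
    using assms tnorm_nonneg[of H] by (simp add: pos_less_divide_eq add_nonneg_pos)
  then show ?thesis
    using assms(1) by (simp add: tnorm_tscale algebra_simps)
qed

lemma topen_eventually_ray:
  assumes "topen g n S" "tzero g n \<in> S" "H \<in> level g n"
  shows "\<forall>\<^sub>F t in at_right 0. tscale (of_real t) H \<in> S"
proof -
  obtain r where r: "r > 0" and rS: "\<forall>Y\<in>level g n. tnorm (tsub Y (tzero g n)) < r \<longrightarrow> Y \<in> S"
    using assms(1,2) unfolding topen_def by blast
  have "\<forall>\<^sub>F t in at_right 0. 0 < t \<and> t < r / (tnorm H + 1)"
    using r tnorm_nonneg[of H]
    by (intro eventually_conj eventually_at_right_less eventually_at_right_zero_less) auto
  then show ?thesis
  proof eventually_elim
    case (elim t)
    then show ?case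
      using rS tnorm_ray_less[of t r H] tscale_level[OF assms(3)] tsub_tzero_right by metis
  qed
qed

lemma has_tderiv_directional:
  assumes F: "has_tderiv g n S F L (tzero g n)"
    and S: "topen g n S" "tzero g n \<in> S" and FS: "F ` S \<subseteq> level g n"
    and H: "H \<in> level g n"
    and \<phi>_tsub: "\<And>X Y. X \<in> level g n \<Longrightarrow> Y \<in> level g n \<Longrightarrow> \<phi> (tsub X Y) = \<phi> X - \<phi> Y"
    and \<phi>_tscale: "\<And>a X. X \<in> level g n \<Longrightarrow> \<phi> (tscale a X) = a * \<phi> X"
    and \<phi>_bound: "\<And>X. X \<in> level g n \<Longrightarrow> cmod (\<phi> X) \<le> C * tnorm X"
  shows "((\<lambda>t. (\<phi> (F (tscale (of_real t) H)) - \<phi> (F (tzero g n))) / of_real t) \<longlongrightarrow> \<phi> (L H))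
           (at_right 0)"
proof (rule tendstoI)
  fix e :: real
  assume e: "e > 0"
  define K where "K = \<bar>C\<bar> * tnorm H"
  have K: "K \<ge> 0"
    by (simp add: K_def tnorm_nonneg)
  define \<epsilon> where "\<epsilon> = e / (2 * (K + 1))"
  have \<epsilon>: "\<epsilon> > 0" and K\<epsilon>: "K * \<epsilon> < e"
    using e K by (simp_all add: \<epsilon>_def field_simps add_nonneg_pos)
  have lin: "tlinear g n L"
    using F by (simp add: has_tderiv_def)
  obtain d where d: "d > 0" and dF: "\<forall>H'\<in>level g n. tadd (tzero g n) H' \<in> S \<longrightarrow> tnorm H' < d \<longrightarrow>
      tnorm (tsub (tsub (F (tadd (tzero g n) H')) (F (tzero g n))) (L H')) \<le> \<epsilon> * tnorm H'"
    using F \<epsilon> unfolding has_tderiv_def by blast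
  have "\<forall>\<^sub>F t in at_right 0. 0 < t \<and> t < d / (tnorm H + 1) \<and> tscale (of_real t) H \<in> S"
    using d tnorm_nonneg[of H]
    by (intro eventually_conj eventually_at_right_less eventually_at_right_zero_less
        topen_eventually_ray[OF S H]) auto
  then show "\<forall>\<^sub>F t in at_right 0.
      dist ((\<phi> (F (tscale (of_real t) H)) - \<phi> (F (tzero g n))) / of_real t) (\<phi> (L H)) < e"
  proof eventually_elim
    case (elim t)
    then have t: "t > 0" and tHS: "tscale (of_real t) H \<in> S"
      by auto
    define R where "R = tsub (tsub (F (tscale (of_real t) H)) (F (tzero g n))) (L (tscale (of_real t) H))"
    have "tnorm R \<le> \<epsilon> * tnorm (tscale (of_real t) H)"
      using dF tscale_level[OF H] tHS tnorm_ray_less[of t d H] elim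
      by (simp add: R_def tadd_tzero_left)
    then have R: "tnorm R \<le> \<epsilon> * (t * tnorm H)"
      using t by (simp add: tnorm_tscale)
    have levels: "F (tscale (of_real t) H) \<in> level g n" "F (tzero g n) \<in> level g n" "L H \<in> level g n"
      using FS tHS S(2) tlinear_level[OF lin H] by auto
    have "L (tscale (of_real t) H) = tscale (of_real t) (L H)"
      using lin H by (simp add: tlinear_def)
    then have "\<phi> R = \<phi> (F (tscale (of_real t) H)) - \<phi> (F (tzero g n)) - of_real t * \<phi> (L H)"
      using levels by (simp add: R_def \<phi>_tsub \<phi>_tscale tsub_level tscale_level)
    then have "(\<phi> (F (tscale (of_real t) H)) - \<phi> (F (tzero g n))) / of_real t - \<phi> (L H)
        = \<phi> R / of_real t"
      using t by (simp add: field_simps)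
    moreover have "cmod (\<phi> R) \<le> K * \<epsilon> * t"
    proof -
      have "R \<in> level g n"
        using levels tlinear_level[OF lin tscale_level[OF H]] by (simp add: R_def tsub_level)
      then have "cmod (\<phi> R) \<le> C * tnorm R"
        by (rule \<phi>_bound)
      also have "\<dots> \<le> \<bar>C\<bar> * tnorm R"
        by (simp add: mult_right_mono tnorm_nonneg)
      also have "\<dots> \<le> \<bar>C\<bar> * (\<epsilon> * (t * tnorm H))"
        by (rule mult_left_mono[OF R]) simp
      finally show ?thesis
        by (simp add: K_def algebra_simps)
    qed
    ultimately have "dist ((\<phi> (F (tscale (of_real t) H)) - \<phi> (F (tzero g n))) / of_real t) (\<phi> (L H))
        \<le> K * \<epsilon>"
      using t by (simp add: dist_norm norm_divide pos_divide_le_eq)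
    then show ?case
      using K\<epsilon> by linarith
  qed
qed

section \<open>Common eigenvectors and free maps\<close>

definition common_eigvec ::
    "nat \<Rightarrow> nat \<Rightarrow> complex mat list \<Rightarrow> (nat \<Rightarrow> complex) \<Rightarrow> complex mat list \<Rightarrow> bool" where
  "common_eigvec g n H w h \<longleftrightarrow> (\<forall>j<g. \<forall>i<n. row_comb n j i w H = w i * h ! j $$ (0,0))"

definition col_mat :: "nat \<Rightarrow> (nat \<Rightarrow> complex) \<Rightarrow> complex mat" where
  "col_mat n w = mat n 1 (\<lambda>(i,_). w i)"

lemma row_comb_one: "row_comb 1 j 0 (\<lambda>_. a) h = a * h ! j $$ (0,0)"
  by (simp add: row_comb_def)

lemma common_eigvec_iff_intertwining:
  assumes H: "H \<in> level g n" and h: "h \<in> level g 1"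
  shows "common_eigvec g n H w h \<longleftrightarrow> (\<forall>j<g. H ! j * col_mat n w = col_mat n w * h ! j)"
proof -
  have "H ! j * col_mat n w = col_mat n w * h ! j \<longleftrightarrow>
      (\<forall>i<n. row_comb n j i w H = w i * h ! j $$ (0,0))" if j: "j < g" for j
  proof -
    have "H ! j \<in> carrier_mat n n" "h ! j \<in> carrier_mat 1 1"
      using H h j by (auto intro: level_nth)
    then show ?thesis
      by (auto simp: mat_eq_iff col_mat_def row_comb_def scalar_prod_def mult.commute
          atLeast0LessThan)
  qed
  then show ?thesis
    by (auto simp: common_eigvec_def)
qed

lemma nc_set_level: "nc_set g D \<Longrightarrow> m \<ge> 1 \<Longrightarrow> X \<in> D m \<Longrightarrow> X \<in> level g m"
  by (auto simp: nc_set_def)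

lemma free_map_in_domain: "free_map g D f \<Longrightarrow> m \<ge> 1 \<Longrightarrow> X \<in> D m \<Longrightarrow> f m X \<in> D m"
  by (simp add: free_map_def)

lemma free_map_common_eigvec:
  assumes f: "free_map g D f" and D: "nc_set g D" and n: "n \<ge> 1"
    and X: "X \<in> D n" and x: "x \<in> D 1" and eig: "common_eigvec g n X w x"
  shows "common_eigvec g n (f n X) w (f 1 x)"
proof -
  have levels: "\<And>m Y. m \<ge> 1 \<Longrightarrow> Y \<in> D m \<Longrightarrow> Y \<in> level g m \<and> f m Y \<in> level g m"
    using f D by (blast intro: nc_set_level free_map_in_domain)
  have "\<forall>j<g. X ! j * col_mat n w = col_mat n w * x ! j"
    using eig levels[OF n X] levels[OF _ x] common_eigvec_iff_intertwining by blast
  then have "\<forall>j<g. f n X ! j * col_mat n w = col_mat n w * f 1 x ! j"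
    using f n X x unfolding free_map_def by (auto simp: col_mat_def)
  then show ?thesis
    using levels[OF n X] levels[OF _ x] common_eigvec_iff_intertwining by blast
qed

lemma common_eigvec_tscale:
  assumes "H \<in> level g n" "h \<in> level g 1" "common_eigvec g n H w h"
  shows "common_eigvec g n (tscale a H) w (tscale a h)"
proof -
  have "(a \<cdot>\<^sub>m h ! j) $$ (0,0) = a * h ! j $$ (0,0)" if "j < g" for j
    using level_nth[OF assms(2) that] by simp
  then show ?thesis
    using assms by (auto simp: common_eigvec_def row_comb_tscale tscale_nth level_length)
qed

lemma common_eigvec_tzero: "common_eigvec g n (tzero g n) w (tzero g 1)"
  by (simp add: common_eigvec_def row_comb_def tzero_def)

lemma nc_domain_at_level:
  assumes "nc_domain g D" "contains_zero g D" "free_map g D f" "m \<ge> 1"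
  shows "topen g m (D m)" "tzero g m \<in> D m" "f m ` D m \<subseteq> level g m"
  using assms nc_set_level free_map_in_domain
  by (auto simp: nc_domain_def contains_zero_def)

lemma free_map_eventually_common_eigvec:
  assumes D: "nc_domain g D" "contains_zero g D" and f: "free_map g D f" and n: "n \<ge> 1"
    and H: "H \<in> level g n" and h: "h \<in> level g 1" and eig: "common_eigvec g n H w h"
  shows "\<forall>\<^sub>F t in at_right 0.
    common_eigvec g n (f n (tscale (of_real t) H)) w (f 1 (tscale (of_real t) h))"
proof -
  have nc: "nc_set g D"
    using D(1) by (simp add: nc_domain_def)
  have "\<forall>\<^sub>F t in at_right 0. tscale (of_real t) H \<in> D n \<and> tscale (of_real t) h \<in> D 1"
    using nc_domain_at_level[OF D f n] nc_domain_at_level[OF D f order_refl] H h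
    by (intro eventually_conj topen_eventually_ray)
  then show ?thesis
    by eventually_elim
       (use free_map_common_eigvec[OF f nc n] common_eigvec_tscale[OF H h eig] in blast)
qed

lemma tderiv_common_eigvec:
  assumes D: "nc_domain g D" "contains_zero g D" and f: "free_map g D f" and n: "n \<ge> 1"
    and L: "has_tderiv g n (D n) (f n) L (tzero g n)"
    and L1: "has_tderiv g 1 (D 1) (f 1) L1 (tzero g 1)"
    and H: "H \<in> level g n" and h: "h \<in> level g 1" and eig: "common_eigvec g n H w h"
  shows "common_eigvec g n (L H) w (L1 h)"
  unfolding common_eigvec_def
proof (intro allI impI)
  fix j i
  assume j: "j < g" and i: "i < n"
  note Dn = nc_domain_at_level[OF D f n] and D1 = nc_domain_at_level[OF D f order_refl]
  let ?\<phi> = "row_comb n j i w" and ?\<psi> = "row_comb 1 j 0 (\<lambda>_. w i)"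
  have lim_n: "((\<lambda>t. (?\<phi> (f n (tscale (of_real t) H)) - ?\<phi> (f n (tzero g n))) / of_real t)
      \<longlongrightarrow> ?\<phi> (L H)) (at_right 0)"
    by (rule has_tderiv_directional[OF L Dn H, where C = "\<Sum>c<n. cmod (w c)"])
       (use j i in \<open>auto simp: row_comb_tsub row_comb_tscale norm_row_comb_le\<close>)
  have lim_1: "((\<lambda>t. (?\<psi> (f 1 (tscale (of_real t) h)) - ?\<psi> (f 1 (tzero g 1))) / of_real t)
      \<longlongrightarrow> ?\<psi> (L1 h)) (at_right 0)"
    by (rule has_tderiv_directional[OF L1 D1 h, where C = "cmod (w i)"])
       (use j norm_row_comb_le[of _ g 1 j 0 "\<lambda>_. w i"] in \<open>auto simp: row_comb_tsub row_comb_tscale\<close>)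
  have at_zero: "common_eigvec g n (f n (tzero g n)) w (f 1 (tzero g 1))"
    using free_map_common_eigvec[OF f _ n Dn(2) D1(2) common_eigvec_tzero] D(1)
    by (simp add: nc_domain_def)
  from free_map_eventually_common_eigvec[OF D f n H h eig]
  have "\<forall>\<^sub>F t in at_right 0.
      (?\<psi> (f 1 (tscale (of_real t) h)) - ?\<psi> (f 1 (tzero g 1))) / of_real t =
      (?\<phi> (f n (tscale (of_real t) H)) - ?\<phi> (f n (tzero g n))) / of_real t"
    by eventually_elim
       (use at_zero j i in \<open>simp add: common_eigvec_def row_comb_one del: One_nat_def\<close>)
  with lim_1 have "((\<lambda>t. (?\<phi> (f n (tscale (of_real t) H)) - ?\<phi> (f n (tzero g n))) / of_real t)
      \<longlongrightarrow> ?\<psi> (L1 h)) (at_right 0)"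
    by (rule Lim_transform_eventually)
  with lim_n have "?\<phi> (L H) = ?\<psi> (L1 h)"
    by (rule tendsto_unique[OF trivial_limit_at_right_real])
  then show "row_comb n j i w (L H) = w i * L1 h ! j $$ (0,0)"
    by (simp add: row_comb_one del: One_nat_def)
qed

section \<open>Linear maps preserving eigen-relations\<close>

definition elem_tup :: "nat \<Rightarrow> nat \<Rightarrow> nat \<Rightarrow> nat \<Rightarrow> nat \<Rightarrow> complex mat list" where
  "elem_tup g n k a b = map (\<lambda>j. mat n n (\<lambda>(i,c). of_bool (j = k \<and> i = a \<and> c = b))) [0..<g]"

lemma elem_tup_level: "elem_tup g n k a b \<in> level g n"
  by (auto simp: elem_tup_def level_def)

lemma elem_tup_entry:
  "j < g \<Longrightarrow> i < n \<Longrightarrow> c < n \<Longrightarrow> elem_tup g n k a b ! j $$ (i,c) = of_bool (j = k \<and> i = a \<and> c = b)"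
  by (simp add: elem_tup_def)

lemma row_comb_diff:
  "row_comb n j i (\<lambda>c. v c - w c) X = row_comb n j i v X - row_comb n j i w X"
  by (simp add: row_comb_def algebra_simps sum_subtractf)

lemma row_comb_unit: "a < n \<Longrightarrow> row_comb n j i (\<lambda>c. of_bool (c = a)) X = X ! j $$ (i,a)"
proof -
  assume "a < n"
  have "row_comb n j i (\<lambda>c. of_bool (c = a)) X = (\<Sum>c<n. if c = a then X ! j $$ (i,c) else 0)"
    unfolding row_comb_def by (rule sum.cong) auto
  with \<open>a < n\<close> show ?thesis
    by simp
qed

lemma common_eigvec_unit:
  "a < n \<Longrightarrow> common_eigvec g n H (\<lambda>c. of_bool (c = a)) h \<longleftrightarrow>
     (\<forall>j<g. \<forall>i<n. H ! j $$ (i,a) = of_bool (i = a) * h ! j $$ (0,0))"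
  by (simp add: common_eigvec_def row_comb_unit)

lemma common_eigvec_unit_diff:
  "a < n \<Longrightarrow> b < n \<Longrightarrow> common_eigvec g n H (\<lambda>c. of_bool (c = b) - of_bool (c = a)) (tzero g 1) \<longleftrightarrow>
     (\<forall>j<g. \<forall>i<n. H ! j $$ (i,b) = H ! j $$ (i,a))"
  by (simp add: common_eigvec_def row_comb_diff row_comb_unit tzero_def)

definition ttrunc :: "nat \<Rightarrow> nat \<Rightarrow> complex mat list \<Rightarrow> (nat \<times> nat \<times> nat) set \<Rightarrow> complex mat list" where
  "ttrunc g n X S = map (\<lambda>j. mat n n (\<lambda>(i,c). if (j,i,c) \<in> S then X ! j $$ (i,c) else 0)) [0..<g]"

lemma ttrunc_level: "ttrunc g n X S \<in> level g n"
  by (auto simp: ttrunc_def level_def)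

lemma ttrunc_empty: "ttrunc g n X {} = tzero g n"
  by (rule nth_equalityI) (auto simp: ttrunc_def tzero_def intro!: eq_matI)

lemma ttrunc_full: "X \<in> level g n \<Longrightarrow> ttrunc g n X ({..<g} \<times> {..<n} \<times> {..<n}) = X"
  by (rule nth_equalityI) (auto simp: ttrunc_def level_def intro!: eq_matI)

lemma ttrunc_insert:
  assumes "(k,a,b) \<notin> S" "k < g"
  shows "ttrunc g n X (insert (k,a,b) S) = tadd (ttrunc g n X S) (tscale (X ! k $$ (a,b)) (elem_tup g n k a b))"
  by (rule nth_equalityI)
     (use assms in \<open>auto simp: ttrunc_def tadd_def tscale_def elem_tup_def intro!: eq_matI\<close>)

lemma tlinear_ttrunc_entry:
  assumes L: "tlinear g n L"
    and elem: "\<And>k a b j i c. k < g \<Longrightarrow> a < n \<Longrightarrow> b < n \<Longrightarrow> j < g \<Longrightarrow> i < n \<Longrightarrow> c < n \<Longrightarrow>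
       L (elem_tup g n k a b) ! j $$ (i,c) = (if i = a \<and> c = b then A j k else 0)"
    and S: "finite S" "S \<subseteq> {..<g} \<times> {..<n} \<times> {..<n}"
    and j: "j < g" and i: "i < n" and c: "c < n"
  shows "L (ttrunc g n X S) ! j $$ (i,c) = (\<Sum>k<g. A j k * (if (k,i,c) \<in> S then X ! k $$ (i,c) else 0))"
  using S
proof (induction S rule: finite_subset_induct)
  case empty
  show ?case
    unfolding ttrunc_empty tlinear_tzero[OF L] using j i c by (simp add: tzero_def)
next
  case (insert t S)
  obtain k a b where t: "t = (k,a,b)" and k: "k < g" and a: "a < n" and b: "b < n"
    using insert(2) by auto
  have new: "(k,a,b) \<notin> S"
    using insert(3) t by simp
  define x where "x = X ! k $$ (a,b)"
  have "L (ttrunc g n X (insert t S)) = tadd (L (ttrunc g n X S)) (tscale x (L (elem_tup g n k a b)))"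
    using L unfolding t ttrunc_insert[OF new k] x_def
    by (simp add: tlinear_def ttrunc_level elem_tup_level tscale_level)
  moreover have Y: "L (ttrunc g n X S) \<in> level g n" and E: "L (elem_tup g n k a b) \<in> level g n"
    using L ttrunc_level elem_tup_level by (blast intro: tlinear_level)+
  ultimately have "L (ttrunc g n X (insert t S)) ! j $$ (i,c)
      = L (ttrunc g n X S) ! j $$ (i,c) + x * L (elem_tup g n k a b) ! j $$ (i,c)"
    using j i c level_nth[OF Y j] level_nth[OF E j]
    by (simp add: tadd_nth tscale_nth level_length[OF Y] level_length[OF E] tscale_def)
  also have "\<dots> = (\<Sum>k'<g. A j k' * (if (k',i,c) \<in> S then X ! k' $$ (i,c) else 0))
      + (\<Sum>k'<g. if k' = k then (if i = a \<and> c = b then A j k' * X ! k' $$ (i,c) else 0) else 0)"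
    using insert(4) elem[OF k a b j i c] k by (simp add: x_def)
  also have "\<dots> = (\<Sum>k'<g. A j k' * (if (k',i,c) \<in> insert t S then X ! k' $$ (i,c) else 0))"
    unfolding sum.distrib[symmetric] by (rule sum.cong) (use new in \<open>auto simp: t\<close>)
  finally show ?case .
qed

lemma tlinear_entry_expansion:
  assumes L: "tlinear g n L"
    and elem: "\<And>k a b j i c. k < g \<Longrightarrow> a < n \<Longrightarrow> b < n \<Longrightarrow> j < g \<Longrightarrow> i < n \<Longrightarrow> c < n \<Longrightarrow>
       L (elem_tup g n k a b) ! j $$ (i,c) = (if i = a \<and> c = b then A j k else 0)"
    and X: "X \<in> level g n" and j: "j < g" and i: "i < n" and c: "c < n"
  shows "L X ! j $$ (i,c) = (\<Sum>k<g. A j k * X ! k $$ (i,c))"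
  using tlinear_ttrunc_entry[OF L elem finite_SigmaI subset_refl j i c, of X] ttrunc_full[OF X] i c
  by simp

lemma tampl_entry:
  assumes X: "X \<in> level g n" and j: "j < g"
  shows "tampl g n T X ! j \<in> carrier_mat n n"
    and "i < n \<Longrightarrow> c < n \<Longrightarrow> tampl g n T X ! j $$ (i,c) = (\<Sum>k<g. T (unit_tup g k) ! j $$ (0,0) * X ! k $$ (i,c))"
proof -
  let ?a = "\<lambda>k. T (unit_tup g k) ! j $$ (0,0)"
  have fold: "foldr (\<lambda>k B. ?a k \<cdot>\<^sub>m X ! k + B) ks (0\<^sub>m n n) \<in> carrier_mat n n \<and>
      (\<forall>i<n. \<forall>c<n. foldr (\<lambda>k B. ?a k \<cdot>\<^sub>m X ! k + B) ks (0\<^sub>m n n) $$ (i,c)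
         = (\<Sum>k\<leftarrow>ks. ?a k * X ! k $$ (i,c)))"
    if "\<forall>k\<in>set ks. k < g" for ks
    using that by (induction ks) (auto dest: level_nth[OF X])
  have tampl: "tampl g n T X ! j = foldr (\<lambda>k B. ?a k \<cdot>\<^sub>m X ! k + B) [0..<g] (0\<^sub>m n n)"
    using j by (simp add: tampl_def)
  show "tampl g n T X ! j \<in> carrier_mat n n"
    unfolding tampl using fold[of "[0..<g]"] by simp
  show "tampl g n T X ! j $$ (i,c) = (\<Sum>k<g. ?a k * X ! k $$ (i,c))" if "i < n" "c < n"
    unfolding tampl using fold[of "[0..<g]"] that
    by (simp add: sum_set_upt_conv_sum_list_nat[symmetric] atLeast0LessThan)
qed

locale common_eigvec_preserving =
  fixes g n :: nat and L L1 :: "complex mat list \<Rightarrow> complex mat list"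
  assumes tlinear: "tlinear g n L" and tlinear1: "tlinear g 1 L1"
    and preserves: "\<And>H h w. H \<in> level g n \<Longrightarrow> h \<in> level g 1 \<Longrightarrow> common_eigvec g n H w h \<Longrightarrow>
        common_eigvec g n (L H) w (L1 h)"
begin

lemma elem_tup_image_off_column:
  assumes "c \<noteq> b" "c < n" "j < g" "i < n"
  shows "L (elem_tup g n k a b) ! j $$ (i,c) = 0"
proof -
  have "common_eigvec g n (elem_tup g n k a b) (\<lambda>c'. of_bool (c' = c)) (tzero g 1)"
    using assms by (simp add: common_eigvec_unit elem_tup_entry tzero_def)
  then have "common_eigvec g n (L (elem_tup g n k a b)) (\<lambda>c'. of_bool (c' = c)) (tzero g 1)"
    using preserves elem_tup_level tzero_level tlinear_tzero[OF tlinear1] by metis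
  then show ?thesis
    using assms by (simp add: common_eigvec_unit tzero_def)
qed

lemma elem_tup_image_diag:
  assumes "a < n" "j < g" "i < n"
  shows "L (elem_tup g n k a a) ! j $$ (i,a) = of_bool (i = a) * L1 (unit_tup g k) ! j $$ (0,0)"
proof -
  have "unit_tup g k \<in> level g 1"
    by (auto simp: unit_tup_def level_def)
  moreover have "common_eigvec g n (elem_tup g n k a a) (\<lambda>c. of_bool (c = a)) (unit_tup g k)"
    using assms by (simp add: common_eigvec_unit elem_tup_entry unit_tup_def)
  ultimately have "common_eigvec g n (L (elem_tup g n k a a)) (\<lambda>c. of_bool (c = a)) (L1 (unit_tup g k))"
    using preserves elem_tup_level by blast
  then show ?thesis
    using assms by (simp add: common_eigvec_unit)
qed

lemma elem_tup_image_column: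
  assumes a: "a < n" and b: "b < n" and j: "j < g" and i: "i < n"
  shows "L (elem_tup g n k a b) ! j $$ (i,b) = L (elem_tup g n k a a) ! j $$ (i,a)"
proof (cases "a = b")
  case False
  define M where "M = tadd (elem_tup g n k a a) (elem_tup g n k a b)"
  have "L M = tadd (L (elem_tup g n k a a)) (L (elem_tup g n k a b))"
    using tlinear elem_tup_level by (simp add: M_def tlinear_def)
  then have LM: "L M ! j = L (elem_tup g n k a a) ! j + L (elem_tup g n k a b) ! j"
    using j by (simp add: tadd_nth level_length[OF tlinear_level[OF tlinear elem_tup_level]])
  have "M \<in> level g n"
    by (simp add: M_def tadd_level elem_tup_level)
  moreover have "common_eigvec g n M (\<lambda>c. of_bool (c = b) - of_bool (c = a)) (tzero g 1)"
    using a b by (simp add: common_eigvec_unit_diff M_def tadd_nth elem_tup_def del: One_nat_def)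
  ultimately have "common_eigvec g n (L M) (\<lambda>c. of_bool (c = b) - of_bool (c = a)) (tzero g 1)"
    using preserves tzero_level tlinear_tzero[OF tlinear1] by metis
  then have "L M ! j $$ (i,b) = L M ! j $$ (i,a)"
    using a b j i by (simp add: common_eigvec_unit_diff del: One_nat_def)
  moreover have "L (elem_tup g n k a a) ! j \<in> carrier_mat n n" "L (elem_tup g n k a b) ! j \<in> carrier_mat n n"
    using j tlinear elem_tup_level tlinear_level level_nth by blast+
  ultimately show ?thesis
    using elem_tup_image_off_column[of b a] elem_tup_image_off_column[of a b] False a b i j
    by (simp add: LM)
qed simp

lemma elem_tup_image:
  assumes "a < n" "b < n" "j < g" "i < n" "c < n"
  shows "L (elem_tup g n k a b) ! j $$ (i,c) = (if i = a \<and> c = b then L1 (unit_tup g k) ! j $$ (0,0) else 0)"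
proof (cases "c = b")
  case True
  then show ?thesis
    using assms elem_tup_image_column elem_tup_image_diag by simp
next
  case False
  then show ?thesis
    using assms elem_tup_image_off_column by simp
qed

lemma eq_tampl:
  assumes X: "X \<in> level g n"
  shows "L X = tampl g n L1 X"
proof (rule nth_equalityI)
  have LX: "L X \<in> level g n"
    using tlinear X by (rule tlinear_level)
  then show "length (L X) = length (tampl g n L1 X)"
    by (simp add: level_length tampl_def)
  fix j
  assume "j < length (L X)"
  then have j: "j < g"
    using LX by (simp add: level_length)
  show "L X ! j = tampl g n L1 X ! j"
  proof (rule eq_matI)
    fix i c
    assume "i < dim_row (tampl g n L1 X ! j)" "c < dim_col (tampl g n L1 X ! j)"
    then have i: "i < n" and c: "c < n"
      using tampl_entry(1)[OF X j, of L1] by auto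
    show "L X ! j $$ (i,c) = tampl g n L1 X ! j $$ (i,c)"
      using tlinear_entry_expansion[OF tlinear elem_tup_image X j i c]
        tampl_entry(2)[OF X j i c] by simp
  qed (use tampl_entry(1)[OF X j, of L1] level_nth[OF LX j] in auto)
qed

end

theorem lemma4p2:
  fixes g n :: nat
    and D :: "nat \<Rightarrow> complex mat list set"
    and f :: "nat \<Rightarrow> complex mat list \<Rightarrow> complex mat list"
    and L L1 :: "complex mat list \<Rightarrow> complex mat list"
  assumes "nc_domain g D" and "contains_zero g D" and "nc_bounded g D"
    and "analytic_free_map g D f"
    and "f 1 (tzero g 1) = tzero g 1"
    and "n \<ge> 1"
    and "has_tderiv g n (D n) (f n) L (tzero g n)"
    and "has_tderiv g 1 (D 1) (f 1) L1 (tzero g 1)"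
  shows "\<exists>W. unitary_op g n W \<and> (\<forall>X\<in>level g n. L (W X) = W (tampl g n L1 X))"
proof -
  have free: "free_map g D f"
    using assms(4) by (simp add: analytic_free_map_def)
  have "common_eigvec_preserving g n L L1"
  proof
    show "tlinear g n L" "tlinear g 1 L1"
      using assms(7,8) by (simp_all add: has_tderiv_def)
    show "common_eigvec g n (L H) w (L1 h)"
      if "H \<in> level g n" "h \<in> level g 1" "common_eigvec g n H w h" for H h w
      by (rule tderiv_common_eigvec[OF assms(1,2) free assms(6-8) that])
  qed
  then have "\<forall>X\<in>level g n. L X = tampl g n L1 X"
    by (blast intro: common_eigvec_preserving.eq_tampl)
  moreover have "unitary_op g n id"
    by (auto simp: unitary_op_def tlinear_def)
  ultimately show ?thesis
    by auto
qed

end
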